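(* Let $G\sim\mathrm{SBM}(n;C,P)$ with communities $V_1,\dots,V_c$, let $\mathbf{k}=(\mathbf{k}_1,\dots,\mathbf{k}_c)\in\mathbb{N}_0^c$ with $\mathbf{k}_\ell\le|V_\ell|$, and let $R$ consist of $\mathbf{k}_\ell$ vertices of $V_\ell$ for each $\ell$, chosen independently of the edges of $G$ (e.g. fixed, or uniformly at random within each community). Let $W$ be the number of unordered pairs of distinct rows of $\mathbf{A}^*$ that coincide on all columns in $R$. Then $$\mathbb{P}(R\text{ does not resolve }\mathbf{A}^* )=\mathbb{P}(W>0)\le\mathbb{E}(W)\le f(\mathbf{k}):=\sum_{1\le i\le j\le c}s(i,j)\prod_{\ell=1}^c r(i,j,\ell)^{\mathbf{k}_\ell},$$ where $s(i,i):=\binom{|V_i|}{2}$, $s(i,j):=|V_i||V_j|$ for $i\ne j$, and $r(i,j,\ell):=P(i,\ell)P(j,\ell)+(1-P(i,\ell))(1-P(j,\ell))$. Moreover $f$ is nonincreasing with respect to the componentwise order on $\mathbb{N}_0^c$, and whenever $R$ resolves $\mathbf{A}^*$ it is a resolving set of $G$.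
   Context: Stochastic Block Model: $G\sim\mathrm{SBM}(n;C,P)$, for a partition $C=\{V_1,\dots,V_c\}$ of $V=\{1,\dots,n\}$ and a symmetric $c\times c$ matrix $P$ with entries in $[0,1]$, is the random simple undirected graph on $V$ in which, independently for each pair of distinct vertices $u\in V_i$, $v\in V_j$, the edge $\{u,v\}$ is present with probability $P(i,j)$. $\mathbf{A}^*$ is the adjacency matrix of $G$ with every diagonal entry replaced by $2$. A set $R$ of columns resolves a matrix if its rows restricted to the columns of $R$ are pairwise distinct; a set $R$ of vertices resolves $G$ if every vertex is uniquely determined by its vector of shortest-path distances to the vertices of $R$. *)

theory Defs
  imports "HOL-Probability.Probability"
begin

(* Vertex set V = {0..<n}.  The partition C = {V_0,...,V_{c-1}} is given by a
   community map comm : vertex -> {0..<c}; V_l = {v < n. comm v = l}.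
   A graph on V is encoded by its edge indicator X on unordered pairs {u,v}. *)

definition community :: "nat \<Rightarrow> (nat \<Rightarrow> nat) \<Rightarrow> nat \<Rightarrow> nat set" where
  "community n comm l = {v. v < n \<and> comm v = l}"

definition vpairs :: "nat \<Rightarrow> nat set set" where
  "vpairs n = {{u, v} | u v. u < n \<and> v < n \<and> u \<noteq> v}"

definition sbm :: "nat \<Rightarrow> (nat \<Rightarrow> nat) \<Rightarrow> (nat \<Rightarrow> nat \<Rightarrow> real) \<Rightarrow> (nat set \<Rightarrow> bool) pmf" where
  "sbm n comm P = Pi_pmf (vpairs n) False
      (\<lambda>e. bernoulli_pmf (P (comm (Min e)) (comm (Max e))))"

definition Astar :: "(nat set \<Rightarrow> bool) \<Rightarrow> nat \<Rightarrow> nat \<Rightarrow> nat" where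
  "Astar X u v = (if u = v then 2 else if X {u, v} then 1 else 0)"

definition resolves_matrix :: "nat \<Rightarrow> (nat set \<Rightarrow> bool) \<Rightarrow> nat set \<Rightarrow> bool" where
  "resolves_matrix n X R \<longleftrightarrow>
     (\<forall>u v. u < n \<longrightarrow> v < n \<longrightarrow> u \<noteq> v \<longrightarrow> (\<exists>r\<in>R. Astar X u r \<noteq> Astar X v r))"

definition W :: "nat \<Rightarrow> nat set \<Rightarrow> (nat set \<Rightarrow> bool) \<Rightarrow> nat" where
  "W n R X = card {{u, v} | u v. u < n \<and> v < n \<and> u \<noteq> v \<and>
                              (\<forall>r\<in>R. Astar X u r = Astar X v r)}"

definition edge_rel :: "nat \<Rightarrow> (nat set \<Rightarrow> bool) \<Rightarrow> (nat \<times> nat) set" where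
  "edge_rel n X = {(u, v). u < n \<and> v < n \<and> u \<noteq> v \<and> X {u, v}}"

(* shortest-path distance, \<infinity> if no path *)
definition gdist :: "nat \<Rightarrow> (nat set \<Rightarrow> bool) \<Rightarrow> nat \<Rightarrow> nat \<Rightarrow> enat" where
  "gdist n X u v = (INF m \<in> {m. (u, v) \<in> (edge_rel n X) ^^ m}. enat m)"

definition resolves_graph :: "nat \<Rightarrow> (nat set \<Rightarrow> bool) \<Rightarrow> nat set \<Rightarrow> bool" where
  "resolves_graph n X R \<longleftrightarrow>
     (\<forall>u v. u < n \<longrightarrow> v < n \<longrightarrow> u \<noteq> v \<longrightarrow> (\<exists>r\<in>R. gdist n X u r \<noteq> gdist n X v r))"

definition s_fun :: "nat \<Rightarrow> (nat \<Rightarrow> nat) \<Rightarrow> nat \<Rightarrow> nat \<Rightarrow> real" where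
  "s_fun n comm i j = (if i = j then real (card (community n comm i) choose 2)
                       else real (card (community n comm i)) * real (card (community n comm j)))"

definition r_fun :: "(nat \<Rightarrow> nat \<Rightarrow> real) \<Rightarrow> nat \<Rightarrow> nat \<Rightarrow> nat \<Rightarrow> real" where
  "r_fun P i j l = P i l * P j l + (1 - P i l) * (1 - P j l)"

definition f_bound :: "nat \<Rightarrow> (nat \<Rightarrow> nat) \<Rightarrow> nat \<Rightarrow> (nat \<Rightarrow> nat \<Rightarrow> real) \<Rightarrow> (nat \<Rightarrow> nat) \<Rightarrow> real" where
  "f_bound n comm c P k =
     (\<Sum>(i, j) \<in> {(i, j). i \<le> j \<and> j < c}. s_fun n comm i j * (\<Prod>l<c. r_fun P i j l ^ k l))"

definition admissible :: "nat \<Rightarrow> (nat \<Rightarrow> nat) \<Rightarrow> nat \<Rightarrow> (nat \<Rightarrow> nat) \<Rightarrow> nat set \<Rightarrow> bool" where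
  "admissible n comm c k R \<longleftrightarrow> R \<subseteq> {0..<n} \<and>
     (\<forall>l<c. card (R \<inter> community n comm l) = k l)"

end

theory Submission
  imports Defs
begin

text \<open>
  W is the sum, over unordered pairs {u, v} of vertices, of the indicator that rows u and v of
  A* agree on the columns in R. If u or v lies in R the rows differ there (diagonal entry 2
  against an off-diagonal 0 or 1). Otherwise agreement means X {u, r} = X {v, r} for every
  r \<in> R; these are 2|R| distinct, independent edges, and the pair belonging to r agrees with
  probability r(comm u, comm v, comm r). Hence the pair contributes the product over l of
  r(comm u, comm v, l)^(k l) to E(W), and counting pairs by the communities of their endpoints
  gives f(k). Finally A*(u, r) is 2, 1 or 0 according as the distance from u to r is 0, 1 or
  larger, so a set of columns resolving A* resolves G.
\<close>

section \<open>Distances and the matrix A*\<close>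

lemma gdist_le:
  assumes "(u, v) \<in> edge_rel n X ^^ m"
  shows "gdist n X u v \<le> enat m"
  unfolding gdist_def using assms by (intro INF_lower2[of m]) auto

lemma gdist_ge:
  assumes "\<And>m. (u, v) \<in> edge_rel n X ^^ m \<Longrightarrow> d \<le> m"
  shows "enat d \<le> gdist n X u v"
  unfolding gdist_def using assms by (intro INF_greatest) auto

lemma one_le_gdist:
  assumes "u \<noteq> v"
  shows "1 \<le> gdist n X u v"
proof -
  have "enat 1 \<le> gdist n X u v"
  proof (rule gdist_ge)
    fix m assume "(u, v) \<in> edge_rel n X ^^ m"
    with assms show "1 \<le> m" by (cases m) auto
  qed
  then show ?thesis by (simp add: one_enat_def)
qed

lemma gdist_eq_0_iff: "gdist n X u v = 0 \<longleftrightarrow> u = v"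
proof
  assume "u = v"
  then have "gdist n X u v \<le> enat 0" by (intro gdist_le) simp
  then show "gdist n X u v = 0" by (metis le_zero_eq zero_enat_def)
next
  assume "gdist n X u v = 0"
  with one_le_gdist[of u v n X] show "u = v" by fastforce
qed

lemma gdist_eq_1_iff:
  assumes "u < n" "v < n" "u \<noteq> v"
  shows "gdist n X u v = 1 \<longleftrightarrow> X {u, v}"
proof
  assume "X {u, v}"
  then have "gdist n X u v \<le> enat 1"
    using assms by (intro gdist_le) (auto simp: edge_rel_def)
  with one_le_gdist[OF assms(3)] show "gdist n X u v = 1" by (metis antisym one_enat_def)
next
  assume "gdist n X u v = 1"
  moreover have "\<not> X {u, v} \<Longrightarrow> enat 2 \<le> gdist n X u v"
  proof (rule gdist_ge)
    fix m assume "\<not> X {u, v}" "(u, v) \<in> edge_rel n X ^^ m"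
    with assms(3) have "m \<noteq> 0" "m \<noteq> 1" by (auto simp: edge_rel_def intro: gr0I)
    then show "2 \<le> m" by linarith
  qed
  ultimately show "X {u, v}" by (auto simp: one_enat_def)
qed

lemma Astar_eq_gdist:
  assumes "u < n" "r < n"
  shows "Astar X u r = (if gdist n X u r = 0 then 2 else if gdist n X u r = 1 then 1 else 0)"
  using assms by (cases "u = r") (auto simp: Astar_def gdist_eq_0_iff gdist_eq_1_iff)

lemma resolves_graph_if_resolves_matrix:
  assumes "R \<subseteq> {0..<n}" "resolves_matrix n X R"
  shows "resolves_graph n X R"
  unfolding resolves_graph_def
proof (intro allI impI)
  fix u v assume uv: "u < n" "v < n" "u \<noteq> v"
  then obtain r where r: "r \<in> R" "Astar X u r \<noteq> Astar X v r"
    using assms(2) unfolding resolves_matrix_def by blast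
  have "r < n" using assms(1) r(1) by auto
  have "Astar X u r = Astar X v r" if "gdist n X u r = gdist n X v r"
    by (simp only: Astar_eq_gdist[OF uv(1) \<open>r < n\<close>] Astar_eq_gdist[OF uv(2) \<open>r < n\<close>] that)
  then have "gdist n X u r \<noteq> gdist n X v r" using r(2) by blast
  then show "\<exists>r\<in>R. gdist n X u r \<noteq> gdist n X v r" using r(1) by blast
qed

lemma r_fun_nonneg:
  assumes "0 \<le> P i l" "P i l \<le> 1" "0 \<le> P j l" "P j l \<le> 1"
  shows "0 \<le> r_fun P i j l"
  using assms unfolding r_fun_def by (intro add_nonneg_nonneg mult_nonneg_nonneg) auto

lemma r_fun_le_1:
  assumes "0 \<le> P i l" "P i l \<le> 1" "0 \<le> P j l" "P j l \<le> 1"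
  shows "r_fun P i j l \<le> 1"
proof -
  have "0 \<le> P i l * (1 - P j l) + P j l * (1 - P i l)"
    using assms by (intro add_nonneg_nonneg mult_nonneg_nonneg) auto
  then show ?thesis unfolding r_fun_def by (simp add: algebra_simps)
qed

lemma r_fun_commute: "r_fun P i j l = r_fun P j i l"
  unfolding r_fun_def by (simp add: algebra_simps)

lemma f_bound_nonneg:
  assumes "\<forall>i<c. \<forall>j<c. 0 \<le> P i j \<and> P i j \<le> 1"
  shows "0 \<le> f_bound n comm c P k"
  unfolding f_bound_def
proof (intro sum_nonneg, clarify)
  fix i j assume "i \<le> j" "j < c"
  then have "0 \<le> r_fun P i j l" if "l < c" for l
    using assms that by (intro r_fun_nonneg) auto
  then show "0 \<le> s_fun n comm i j * (\<Prod>l<c. r_fun P i j l ^ k l)"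
    by (auto simp: s_fun_def intro!: mult_nonneg_nonneg prod_nonneg)
qed

lemma f_bound_antimono:
  assumes "\<forall>i<c. \<forall>j<c. 0 \<le> P i j \<and> P i j \<le> 1" and "\<forall>l<c. k1 l \<le> k2 l"
  shows "f_bound n comm c P k2 \<le> f_bound n comm c P k1"
  unfolding f_bound_def
proof (intro sum_mono, clarify)
  fix i j assume ij: "i \<le> j" "j < c"
  have "(\<Prod>l<c. r_fun P i j l ^ k2 l) \<le> (\<Prod>l<c. r_fun P i j l ^ k1 l)"
  proof (intro prod_mono conjI)
    fix l assume l: "l \<in> {..<c}"
    then have "0 \<le> r_fun P i j l" "r_fun P i j l \<le> 1"
      using assms(1) ij by (auto intro: r_fun_nonneg r_fun_le_1)
    then show "0 \<le> r_fun P i j l ^ k2 l" "r_fun P i j l ^ k2 l \<le> r_fun P i j l ^ k1 l"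
      using assms(2) l by (auto intro: power_decreasing)
  qed
  then show "s_fun n comm i j * (\<Prod>l<c. r_fun P i j l ^ k2 l)
      \<le> s_fun n comm i j * (\<Prod>l<c. r_fun P i j l ^ k1 l)"
    by (rule mult_left_mono) (simp add: s_fun_def)
qed

section \<open>Integrals over product distributions\<close>

lemma nn_integral_Pi_pmf_prod_reindex:
  assumes "finite A" "inj_on a R" "a ` R \<subseteq> A"
  shows "(\<integral>\<^sup>+X. (\<Prod>r\<in>R. F r (X (a r))) \<partial>Pi_pmf A dflt p) = (\<Prod>r\<in>R. \<integral>\<^sup>+x. F r x \<partial>p (a r))"
proof -
  let ?B = "a ` R" and ?a' = "the_inv_into R a"
  have finB: "finite ?B" using assms(1,3) finite_subset by blast
  have reindex: "(\<Prod>x\<in>?B. G (?a' x) x) = (\<Prod>r\<in>R. G r (a r))" for G :: "_ \<Rightarrow> _ \<Rightarrow> ennreal"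
    using assms(2) by (simp add: prod.reindex the_inv_into_f_f)
  have "(\<integral>\<^sup>+X. (\<Prod>r\<in>R. F r (X (a r))) \<partial>Pi_pmf A dflt p)
      = (\<integral>\<^sup>+X. (\<Prod>r\<in>R. F r (X (a r))) \<partial>Pi_pmf ?B dflt p)"
    unfolding Pi_pmf_subset[OF assms(1,3)] nn_integral_map_pmf by simp
  also have "\<dots> = (\<integral>\<^sup>+X. (\<Prod>x\<in>?B. F (?a' x) (X x)) \<partial>Pi_pmf ?B dflt p)"
  proof (rule nn_integral_cong)
    fix X
    show "(\<Prod>r\<in>R. F r (X (a r))) = (\<Prod>x\<in>?B. F (?a' x) (X x))"
      using reindex[of "\<lambda>r x. F r (X x)"] by simp
  qed
  also have "\<dots> = (\<Prod>x\<in>?B. \<integral>\<^sup>+y. F (?a' x) y \<partial>p x)"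
    by (rule nn_integral_prod_Pi_pmf[OF finB])
  also have "\<dots> = (\<Prod>r\<in>R. \<integral>\<^sup>+x. F r x \<partial>p (a r))"
    using reindex[of "\<lambda>r x. \<integral>\<^sup>+y. F r y \<partial>p x"] by simp
  finally show ?thesis .
qed

lemma nn_integral_Pi_pmf_prod_pairs:
  assumes "finite A" "inj_on a R" "inj_on b R" "a ` R \<subseteq> A" "b ` R \<subseteq> A" "a ` R \<inter> b ` R = {}"
  shows "(\<integral>\<^sup>+X. (\<Prod>r\<in>R. h r (X (a r)) (X (b r))) \<partial>Pi_pmf A dflt p)
       = (\<Prod>r\<in>R. \<integral>\<^sup>+y. \<integral>\<^sup>+x. h r x y \<partial>p (a r) \<partial>p (b r))"
proof -
  define C where "C = A - a ` R"
  have A: "A = C \<union> a ` R" using assms(4) by (auto simp: C_def)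
  have bC: "b ` R \<subseteq> C" using assms(5,6) by (auto simp: C_def)
  have disj: "C \<inter> a ` R = {}" by (auto simp: C_def)
  have finC: "finite C" and finaR: "finite (a ` R)"
    using assms(1,4) finite_subset by (auto simp: C_def)
  have "(\<integral>\<^sup>+X. (\<Prod>r\<in>R. h r (X (a r)) (X (b r))) \<partial>Pi_pmf A dflt p)
      = (\<integral>\<^sup>+f. \<integral>\<^sup>+g. (\<Prod>r\<in>R. h r (g (a r)) (f (b r))) \<partial>Pi_pmf (a ` R) dflt p \<partial>Pi_pmf C dflt p)"
    unfolding A Pi_pmf_union[OF finC finaR disj] nn_integral_map_pmf nn_integral_pair_pmf'
    using bC by (intro nn_integral_cong prod.cong) (auto simp: C_def)
  also have "\<dots> = (\<integral>\<^sup>+f. (\<Prod>r\<in>R. \<integral>\<^sup>+x. h r x (f (b r)) \<partial>p (a r)) \<partial>Pi_pmf C dflt p)"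
  proof (rule nn_integral_cong)
    fix f
    show "(\<integral>\<^sup>+g. (\<Prod>r\<in>R. h r (g (a r)) (f (b r))) \<partial>Pi_pmf (a ` R) dflt p)
        = (\<Prod>r\<in>R. \<integral>\<^sup>+x. h r x (f (b r)) \<partial>p (a r))"
      using nn_integral_Pi_pmf_prod_reindex[OF finaR assms(2) subset_refl, where F = "\<lambda>r x. h r x (f (b r))"]
      by simp
  qed
  also have "\<dots> = (\<Prod>r\<in>R. \<integral>\<^sup>+y. \<integral>\<^sup>+x. h r x y \<partial>p (a r) \<partial>p (b r))"
    using finC assms(3) bC by (rule nn_integral_Pi_pmf_prod_reindex)
  finally show ?thesis .
qed

lemma prod_of_bool:
  "finite A \<Longrightarrow> (\<Prod>x\<in>A. of_bool (Q x)) = (of_bool (\<forall>x\<in>A. Q x) :: 'a :: comm_semiring_1)"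
  by (induction A rule: finite_induct) auto

lemma nn_integral_bernoulli_pmf_agree:
  assumes "0 \<le> a" "a \<le> 1" "0 \<le> b" "b \<le> 1"
  shows "(\<integral>\<^sup>+y. \<integral>\<^sup>+x. of_bool (x = y) \<partial>bernoulli_pmf a \<partial>bernoulli_pmf b)
       = ennreal (a * b + (1 - a) * (1 - b))"
  using assms by (simp add: ennreal_mult ennreal_plus mult.commute)

definition rows_agree :: "(nat set \<Rightarrow> bool) \<Rightarrow> nat set \<Rightarrow> nat \<Rightarrow> nat \<Rightarrow> bool" where
  "rows_agree X R u v \<longleftrightarrow> (\<forall>r\<in>R. Astar X u r = Astar X v r)"

lemma rows_agree_iff_edges_agree:
  assumes "u \<notin> R" "v \<notin> R"
  shows "rows_agree X R u v \<longleftrightarrow> (\<forall>r\<in>R. X {u, r} = X {v, r})"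
  using assms by (auto simp: rows_agree_def Astar_def split: if_splits)

lemma finite_vpairs: "finite (vpairs n)"
  by (rule finite_subset[of _ "Pow {..<n}"]) (auto simp: vpairs_def)

lemma nn_integral_rows_agree_sbm:
  assumes comm_range: "\<forall>v<n. comm v < c"
    and P_sym: "\<forall>i<c. \<forall>j<c. P i j = P j i"
    and P_range: "\<forall>i<c. \<forall>j<c. 0 \<le> P i j \<and> P i j \<le> 1"
    and R: "R \<subseteq> {0..<n}" and uv: "u < n" "v < n" "u \<noteq> v" "u \<notin> R" "v \<notin> R"
  shows "(\<integral>\<^sup>+X. of_bool (rows_agree X R u v) \<partial>sbm n comm P)
       = ennreal (\<Prod>r\<in>R. r_fun P (comm u) (comm v) (comm r))"
proof -
  define pe where "pe = (\<lambda>e. bernoulli_pmf (P (comm (Min e)) (comm (Max e))))"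
  have finR: "finite R" using R finite_subset by blast
  have pe: "pe {w, r} = bernoulli_pmf (P (comm w) (comm r))" if "w < n" "r \<in> R" for w r
    using that R comm_range P_sym by (cases "w \<le> r") (auto simp: pe_def min_def max_def)
  have in_vpairs: "(\<lambda>r. {w, r}) ` R \<subseteq> vpairs n" if "w < n" "w \<notin> R" for w
    using that R unfolding vpairs_def by fastforce
  have "(\<integral>\<^sup>+X. of_bool (rows_agree X R u v) \<partial>sbm n comm P)
      = (\<integral>\<^sup>+X. (\<Prod>r\<in>R. of_bool (X {u, r} = X {v, r})) \<partial>Pi_pmf (vpairs n) False pe)"
    using uv by (simp add: sbm_def pe_def prod_of_bool[OF finR] rows_agree_iff_edges_agree)
  also have "\<dots> = (\<Prod>r\<in>R. \<integral>\<^sup>+y. \<integral>\<^sup>+x. of_bool (x = y) \<partial>pe {u, r} \<partial>pe {v, r})"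
    using uv by (intro nn_integral_Pi_pmf_prod_pairs finite_vpairs in_vpairs)
      (auto simp: inj_on_def doubleton_eq_iff)
  also have "\<dots> = (\<Prod>r\<in>R. ennreal (r_fun P (comm u) (comm v) (comm r)))"
  proof (rule prod.cong)
    fix r assume "r \<in> R"
    then have "comm u < c" "comm v < c" "comm r < c" using uv R comm_range by auto
    then show "(\<integral>\<^sup>+y. \<integral>\<^sup>+x. of_bool (x = y) \<partial>pe {u, r} \<partial>pe {v, r})
        = ennreal (r_fun P (comm u) (comm v) (comm r))"
      unfolding pe[OF uv(1) \<open>r \<in> R\<close>] pe[OF uv(2) \<open>r \<in> R\<close>] r_fun_def
      using P_range by (intro nn_integral_bernoulli_pmf_agree) auto
  qed simp
  also have "\<dots> = ennreal (\<Prod>r\<in>R. r_fun P (comm u) (comm v) (comm r))"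
    using R uv comm_range P_range by (intro prod_ennreal r_fun_nonneg) auto
  finally show ?thesis .
qed

lemma prod_community_admissible:
  fixes g :: "nat \<Rightarrow> 'a :: comm_monoid_mult"
  assumes "admissible n comm c k R" "\<forall>v<n. comm v < c"
  shows "(\<Prod>r\<in>R. g (comm r)) = (\<Prod>l<c. g l ^ k l)"
proof -
  have R: "R \<subseteq> {0..<n}" and card: "\<forall>l<c. card (R \<inter> community n comm l) = k l"
    using assms(1) by (auto simp: admissible_def)
  have finR: "finite R" using R finite_subset by blast
  have "(\<Prod>r\<in>R. g (comm r)) = (\<Prod>l<c. \<Prod>r\<in>{r\<in>R. comm r = l}. g (comm r))"
    using finR R assms(2) by (intro prod.group[symmetric]) auto
  also have "\<dots> = (\<Prod>l<c. g l ^ card {r\<in>R. comm r = l})"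
    by (intro prod.cong refl) simp
  also have "\<dots> = (\<Prod>l<c. g l ^ card (R \<inter> community n comm l))"
    using R by (intro prod.cong refl arg_cong[where f = "\<lambda>S. g _ ^ card S"]) (auto simp: community_def)
  also have "\<dots> = (\<Prod>l<c. g l ^ k l)" using card by simp
  finally show ?thesis .
qed

lemma nn_integral_rows_agree_sbm_le:
  assumes comm_range: "\<forall>v<n. comm v < c"
    and P_sym: "\<forall>i<c. \<forall>j<c. P i j = P j i"
    and P_range: "\<forall>i<c. \<forall>j<c. 0 \<le> P i j \<and> P i j \<le> 1"
    and adm: "admissible n comm c k R" and uv: "u < v" "v < n"
  shows "(\<integral>\<^sup>+X. of_bool (rows_agree X R u v) \<partial>sbm n comm P)
       \<le> ennreal (\<Prod>l<c. r_fun P (comm u) (comm v) l ^ k l)"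
proof (cases "u \<in> R \<or> v \<in> R")
  case True
  then have "\<not> rows_agree X R u v" for X
    using uv by (auto simp: rows_agree_def Astar_def)
  then show ?thesis by simp
next
  case False
  have R: "R \<subseteq> {0..<n}" using adm by (simp add: admissible_def)
  show ?thesis
    using nn_integral_rows_agree_sbm[OF comm_range P_sym P_range R] False uv
      prod_community_admissible[OF adm comm_range, of "r_fun P (comm u) (comm v)"]
    by simp
qed

section \<open>Counting pairs of vertices\<close>

definition vertex_pairs :: "nat \<Rightarrow> (nat \<times> nat) set" where
  "vertex_pairs n = {(u, v). u < v \<and> v < n}"

lemma finite_vertex_pairs: "finite (vertex_pairs n)"
  by (rule finite_subset[of _ "{..<n} \<times> {..<n}"]) (auto simp: vertex_pairs_def)

lemma W_eq_card_rows_agree: "W n R X = card {(u, v) \<in> vertex_pairs n. rows_agree X R u v}"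
proof -
  let ?S = "{(u, v) \<in> vertex_pairs n. rows_agree X R u v}"
  have "{{u, v} |u v. u < n \<and> v < n \<and> u \<noteq> v \<and> (\<forall>r\<in>R. Astar X u r = Astar X v r)}
      = (\<lambda>(u, v). {u, v}) ` ?S"
  proof (intro equalityI subsetI)
    fix e assume "e \<in> {{u, v} |u v. u < n \<and> v < n \<and> u \<noteq> v \<and> (\<forall>r\<in>R. Astar X u r = Astar X v r)}"
    then obtain u v where e: "e = {u, v}" "u < n" "v < n" "u \<noteq> v" "rows_agree X R u v"
      by (auto simp: rows_agree_def)
    then have "rows_agree X R v u" by (simp add: rows_agree_def)
    then have "(min u v, max u v) \<in> ?S"
      using e by (cases "u < v") (auto simp: vertex_pairs_def min_def max_def)
    then show "e \<in> (\<lambda>(u, v). {u, v}) ` ?S"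
      by (rule rev_image_eqI) (use e in \<open>auto simp: min_def max_def\<close>)
  qed (force simp: vertex_pairs_def rows_agree_def)
  moreover have "inj_on (\<lambda>(u, v). {u, v}) ?S"
    by (auto simp: inj_on_def vertex_pairs_def doubleton_eq_iff)
  ultimately show ?thesis unfolding W_def by (simp add: card_image)
qed

lemma W_pos_iff_not_resolves_matrix: "0 < W n R X \<longleftrightarrow> \<not> resolves_matrix n X R"
proof -
  have "finite {(u, v) \<in> vertex_pairs n. rows_agree X R u v}"
    using finite_vertex_pairs by (rule finite_subset[rotated]) auto
  moreover have "(\<exists>u v. u < v \<and> v < n \<and> rows_agree X R u v) \<longleftrightarrow> \<not> resolves_matrix n X R"
  proof
    assume "\<not> resolves_matrix n X R"
    then obtain u v where uv: "u < n" "v < n" "u \<noteq> v" "rows_agree X R u v"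
      by (auto simp: resolves_matrix_def rows_agree_def)
    then have "rows_agree X R (min u v) (max u v)" by (auto simp: rows_agree_def min_def max_def)
    then show "\<exists>u v. u < v \<and> v < n \<and> rows_agree X R u v"
      using uv by (intro exI[of _ "min u v"] exI[of _ "max u v"]) auto
  next
    assume "\<exists>u v. u < v \<and> v < n \<and> rows_agree X R u v"
    then obtain u v where "u < v" "v < n" "rows_agree X R u v" by blast
    moreover have "u < n" "u \<noteq> v" using calculation by auto
    ultimately show "\<not> resolves_matrix n X R"
      unfolding resolves_matrix_def rows_agree_def by blast
  qed
  ultimately show ?thesis
    unfolding W_eq_card_rows_agree by (auto simp: card_gt_0_iff vertex_pairs_def)
qed

lemma W_le_card_vertex_pairs: "W n R X \<le> card (vertex_pairs n)"
  unfolding W_eq_card_rows_agree using finite_vertex_pairs by (rule card_mono) auto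

definition community_key :: "(nat \<Rightarrow> nat) \<Rightarrow> nat \<times> nat \<Rightarrow> nat \<times> nat" where
  "community_key comm p = (min (comm (fst p)) (comm (snd p)), max (comm (fst p)) (comm (snd p)))"

lemma card_vertex_pairs_between:
  assumes "i < j"
  shows "card {p \<in> vertex_pairs n. community_key comm p = (i, j)}
       = card (community n comm i) * card (community n comm j)"
proof -
  let ?V = "community n comm i \<times> community n comm j" and ?sort = "\<lambda>(x, y). (min x y, max x y :: nat)"
  have "{p \<in> vertex_pairs n. community_key comm p = (i, j)} = ?sort ` ?V"
  proof (intro equalityI subsetI)
    fix p assume p: "p \<in> {p \<in> vertex_pairs n. community_key comm p = (i, j)}"
    obtain u v where uv: "p = (u, v)" by (cases p)
    have h: "u < v" "v < n" "min (comm u) (comm v) = i" "max (comm u) (comm v) = j"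
      using p uv by (auto simp: vertex_pairs_def community_key_def)
    show "p \<in> ?sort ` ?V"
    proof (cases "comm u \<le> comm v")
      case True
      then have "(u, v) \<in> ?V" using h by (auto simp: community_def)
      then show ?thesis using h uv by (intro rev_image_eqI) auto
    next
      case False
      then have "(v, u) \<in> ?V" using h by (auto simp: community_def)
      then show ?thesis using h uv by (intro rev_image_eqI) auto
    qed
  next
    fix p assume "p \<in> ?sort ` ?V"
    then obtain x y where "p = ?sort (x, y)" "x < n" "comm x = i" "y < n" "comm y = j"
      by (auto simp: community_def)
    moreover have "x \<noteq> y" using calculation assms by auto
    ultimately show "p \<in> {p \<in> vertex_pairs n. community_key comm p = (i, j)}"
      using assms by (auto simp: vertex_pairs_def community_key_def min_def max_def)
  qed
  moreover have "inj_on ?sort ?V"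
  proof (rule inj_onI)
    fix p q assume "p \<in> ?V" "q \<in> ?V" "?sort p = ?sort q"
    then show "p = q"
      using assms by (cases p, cases q) (auto simp: community_def min_def max_def split: if_splits)
  qed
  ultimately show ?thesis by (simp add: card_image card_cartesian_product)
qed

lemma card_vertex_pairs_within:
  "card {p \<in> vertex_pairs n. community_key comm p = (i, i)} = card (community n comm i) choose 2"
proof -
  let ?V = "community n comm i" and ?S = "{p \<in> vertex_pairs n. community_key comm p = (i, i)}"
  have image: "{B. B \<subseteq> ?V \<and> card B = 2} = (\<lambda>(x, y). {x, y}) ` ?S"
  proof (intro equalityI subsetI)
    fix B assume "B \<in> {B. B \<subseteq> ?V \<and> card B = 2}"
    then obtain x y where B: "B = {x, y}" "x \<noteq> y" "B \<subseteq> ?V" by (auto simp: card_2_iff)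
    then have "(min x y, max x y) \<in> ?S"
      by (auto simp: vertex_pairs_def community_key_def community_def min_def max_def)
    moreover have "B = (\<lambda>(x, y). {x, y}) (min x y, max x y)"
      using B(1) by (auto simp: min_def max_def)
    ultimately show "B \<in> (\<lambda>(x, y). {x, y}) ` ?S" by (rule rev_image_eqI)
  next
    fix B assume "B \<in> (\<lambda>(x, y). {x, y}) ` ?S"
    then obtain x y where "B = {x, y}" "x < y" "y < n" "min (comm x) (comm y) = i" "max (comm x) (comm y) = i"
      by (auto simp: vertex_pairs_def community_key_def)
    then show "B \<in> {B. B \<subseteq> ?V \<and> card B = 2}"
      by (auto simp: community_def min_def max_def split: if_splits)
  qed
  have "inj_on (\<lambda>(x, y). {x, y}) ?S"
    by (auto simp: inj_on_def vertex_pairs_def doubleton_eq_iff)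
  then have "card ?S = card {B. B \<subseteq> ?V \<and> card B = 2}"
    unfolding image by (simp add: card_image)
  also have "\<dots> = card ?V choose 2" by (simp add: n_subsets community_def)
  finally show ?thesis .
qed

lemma sum_vertex_pairs_by_community:
  fixes G :: "nat \<Rightarrow> nat \<Rightarrow> real"
  assumes "\<forall>v<n. comm v < c" and "\<And>i j. G i j = G j i"
  shows "(\<Sum>(u, v)\<in>vertex_pairs n. G (comm u) (comm v))
       = (\<Sum>(i, j)\<in>{(i, j). i \<le> j \<and> j < c}. s_fun n comm i j * G i j)"
proof -
  let ?T = "{(i, j). i \<le> j \<and> j < c}"
  have finT: "finite ?T" by (rule finite_subset[of _ "{..<c} \<times> {..<c}"]) auto
  have "community_key comm ` vertex_pairs n \<subseteq> ?T"
    using assms(1) by (auto simp: vertex_pairs_def community_key_def)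
  then have "(\<Sum>(u, v)\<in>vertex_pairs n. G (comm u) (comm v))
      = (\<Sum>(i, j)\<in>?T. \<Sum>p\<in>{p \<in> vertex_pairs n. community_key comm p = (i, j)}. G (comm (fst p)) (comm (snd p)))"
    using finite_vertex_pairs finT
    by (subst sum.group[symmetric, where g = "community_key comm"]) (simp_all add: case_prod_unfold)
  also have "\<dots> = (\<Sum>(i, j)\<in>?T. s_fun n comm i j * G i j)"
  proof (rule sum.cong)
    fix ij assume "ij \<in> ?T"
    then obtain i j where ij: "ij = (i, j)" "i \<le> j" by auto
    have "G (comm (fst p)) (comm (snd p)) = G i j"
      if "community_key comm p = (i, j)" for p
      using that assms(2) by (cases "comm (fst p) \<le> comm (snd p)") (auto simp: community_key_def min_def max_def)
    then have "(\<Sum>p\<in>{p \<in> vertex_pairs n. community_key comm p = (i, j)}. G (comm (fst p)) (comm (snd p)))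
        = real (card {p \<in> vertex_pairs n. community_key comm p = (i, j)}) * G i j"
      by simp
    also have "\<dots> = s_fun n comm i j * G i j"
      using ij(2) card_vertex_pairs_between[of i j] card_vertex_pairs_within[of n comm i]
      by (cases "i = j") (simp_all add: s_fun_def)
    finally show "(case ij of (i, j) \<Rightarrow> \<Sum>p\<in>{p \<in> vertex_pairs n. community_key comm p = (i, j)}.
          G (comm (fst p)) (comm (snd p))) = (case ij of (i, j) \<Rightarrow> s_fun n comm i j * G i j)"
      using ij(1) by simp
  qed simp
  finally show ?thesis .
qed

lemma nn_integral_W_sbm_le:
  assumes comm_range: "\<forall>v<n. comm v < c"
    and P_sym: "\<forall>i<c. \<forall>j<c. P i j = P j i"
    and P_range: "\<forall>i<c. \<forall>j<c. 0 \<le> P i j \<and> P i j \<le> 1"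
    and adm: "admissible n comm c k R"
  shows "(\<integral>\<^sup>+X. real (W n R X) \<partial>sbm n comm P) \<le> ennreal (f_bound n comm c P k)"
proof -
  let ?G = "\<lambda>i j. \<Prod>l<c. r_fun P i j l ^ k l"
  have "(\<integral>\<^sup>+X. real (W n R X) \<partial>sbm n comm P)
      = (\<integral>\<^sup>+X. (\<Sum>(u, v)\<in>vertex_pairs n. of_bool (rows_agree X R u v)) \<partial>sbm n comm P)"
    using finite_vertex_pairs
    by (simp add: W_eq_card_rows_agree ennreal_of_nat_eq_real_of_nat[symmetric] Int_def case_prod_unfold)
  also have "\<dots> = (\<Sum>(u, v)\<in>vertex_pairs n. \<integral>\<^sup>+X. of_bool (rows_agree X R u v) \<partial>sbm n comm P)"
    by (simp add: nn_integral_sum case_prod_unfold)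
  also have "\<dots> \<le> (\<Sum>(u, v)\<in>vertex_pairs n. ennreal (?G (comm u) (comm v)))"
    by (intro sum_mono) (auto simp: vertex_pairs_def intro!: nn_integral_rows_agree_sbm_le[OF assms])
  also have "\<dots> = ennreal (\<Sum>(u, v)\<in>vertex_pairs n. ?G (comm u) (comm v))"
    unfolding case_prod_unfold using comm_range P_range
    by (intro sum_ennreal) (auto simp: vertex_pairs_def intro!: prod_nonneg zero_le_power r_fun_nonneg)
  also have "(\<Sum>(u, v)\<in>vertex_pairs n. ?G (comm u) (comm v)) = f_bound n comm c P k"
    unfolding f_bound_def
    by (rule sum_vertex_pairs_by_community[OF comm_range]) (subst r_fun_commute, rule refl)
  finally show ?thesis .
qed

lemma measure_pmf_prob_pos_le_expectation:
  fixes f :: "'a \<Rightarrow> nat"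
  assumes "integrable (measure_pmf M) (\<lambda>x. real (f x))"
  shows "measure_pmf.prob M {x. 0 < f x} \<le> measure_pmf.expectation M (\<lambda>x. real (f x))"
proof -
  have "measure_pmf.prob M {x. 0 < f x} = measure_pmf.expectation M (indicator {x. 0 < f x})"
    by simp
  also have "\<dots> \<le> measure_pmf.expectation M (\<lambda>x. real (f x))"
  proof (rule integral_mono[OF _ assms])
    show "integrable (measure_pmf M) (indicator {x. 0 < f x} :: 'a \<Rightarrow> real)"
      by (rule integrable_real_indicator) (simp_all add: measure_pmf.emeasure_eq_measure)
  qed (auto simp: indicator_def)
  finally show ?thesis .
qed

lemma integrable_W: "integrable (measure_pmf M) (\<lambda>(R, X). real (W n R X))"
  by (intro measure_pmf.integrable_const_bound[where B = "card (vertex_pairs n)"])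
    (auto simp: W_le_card_vertex_pairs)

lemma expectation_W_le_f_bound:
  assumes "\<forall>v<n. comm v < c"
    and "\<forall>i<c. \<forall>j<c. P i j = P j i"
    and P_range: "\<forall>i<c. \<forall>j<c. 0 \<le> P i j \<and> P i j \<le> 1"
    and R_adm: "\<forall>R\<in>set_pmf Rdist. admissible n comm c k R"
  shows "measure_pmf.expectation (pair_pmf Rdist (sbm n comm P)) (\<lambda>(R, X). real (W n R X))
       \<le> f_bound n comm c P k"
proof -
  have "ennreal (measure_pmf.expectation (pair_pmf Rdist (sbm n comm P)) (\<lambda>(R, X). real (W n R X)))
      = (\<integral>\<^sup>+R. \<integral>\<^sup>+X. real (W n R X) \<partial>sbm n comm P \<partial>Rdist)"
    using integrable_W by (subst nn_integral_eq_integral[symmetric])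
      (auto simp: nn_integral_pair_pmf' case_prod_unfold)
  also have "\<dots> \<le> (\<integral>\<^sup>+R. ennreal (f_bound n comm c P k) \<partial>Rdist)"
    using R_adm by (intro nn_integral_mono_AE AE_pmfI nn_integral_W_sbm_le[OF assms(1-3)]) auto
  also have "\<dots> = ennreal (f_bound n comm c P k)" by simp
  finally show ?thesis
    using f_bound_nonneg[OF P_range] by (simp add: ennreal_le_iff)
qed

theorem mainTheorem9:
  fixes n c :: nat and comm :: "nat \<Rightarrow> nat" and P :: "nat \<Rightarrow> nat \<Rightarrow> real"
    and k :: "nat \<Rightarrow> nat" and Rdist :: "nat set pmf"
  assumes comm_range: "\<forall>v<n. comm v < c"
    and P_sym: "\<forall>i<c. \<forall>j<c. P i j = P j i"
    and P_range: "\<forall>i<c. \<forall>j<c. 0 \<le> P i j \<and> P i j \<le> 1"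
    and k_le: "\<forall>l<c. k l \<le> card (community n comm l)"
    and R_adm: "\<forall>R\<in>set_pmf Rdist. admissible n comm c k R"
  defines "J \<equiv> pair_pmf Rdist (sbm n comm P)"
  shows "measure_pmf.prob J {(R, X). \<not> resolves_matrix n X R}
           = measure_pmf.prob J {(R, X). W n R X > 0}
       \<and> measure_pmf.prob J {(R, X). W n R X > 0}
           \<le> measure_pmf.expectation J (\<lambda>(R, X). real (W n R X))
       \<and> measure_pmf.expectation J (\<lambda>(R, X). real (W n R X)) \<le> f_bound n comm c P k
       \<and> (\<forall>k1 k2 :: nat \<Rightarrow> nat. (\<forall>l<c. k1 l \<le> k2 l) \<longrightarrow>
            f_bound n comm c P k2 \<le> f_bound n comm c P k1)
       \<and> (\<forall>R X. R \<subseteq> {0..<n} \<longrightarrow> resolves_matrix n X R \<longrightarrow> resolves_graph n X R)"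
proof (intro conjI)
  show "measure_pmf.prob J {(R, X). \<not> resolves_matrix n X R} = measure_pmf.prob J {(R, X). W n R X > 0}"
    by (simp add: W_pos_iff_not_resolves_matrix)
  show "measure_pmf.prob J {(R, X). W n R X > 0} \<le> measure_pmf.expectation J (\<lambda>(R, X). real (W n R X))"
    using measure_pmf_prob_pos_le_expectation[of J "\<lambda>(R, X). W n R X"] integrable_W
    by (simp add: case_prod_unfold)
  show "measure_pmf.expectation J (\<lambda>(R, X). real (W n R X)) \<le> f_bound n comm c P k"
    unfolding J_def using comm_range P_sym P_range R_adm by (rule expectation_W_le_f_bound)
  show "\<forall>k1 k2 :: nat \<Rightarrow> nat. (\<forall>l<c. k1 l \<le> k2 l) \<longrightarrow>
      f_bound n comm c P k2 \<le> f_bound n comm c P k1"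
    using f_bound_antimono[OF P_range] by blast
  show "\<forall>R X. R \<subseteq> {0..<n} \<longrightarrow> resolves_matrix n X R \<longrightarrow> resolves_graph n X R"
    using resolves_graph_if_resolves_matrix by blast
qed

end
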